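(* Let $mG$ be a finite $|N|$-player canonical misinformation game with $|S|$ pure strategy profiles (positions). Then the length $\mathfrak{L}_{\mathcal{AD}}(mG)$ of the Adaptation Procedure on $mG$ satisfies $\mathfrak{L}_{\mathcal{AD}}(mG)\le |S|$.
   Context: A normal-form game is $G=\langle N,S,P\rangle$ with finite players $N$, finite pure strategy sets $S_i$, positions $S=\times_i S_i$, payoffs $P_i:S\to\mathbb{R}$. A misinformation game $mG=\langle G^0,G^1,\dots,G^{|N|}\rangle$ consists of the actual game $G^0$ and subjective games $G^i$; it is canonical if all $G^i=\langle N,S,P^i\rangle$ differ from $G^0$ only in payoffs and in every $G^i$ all players have equally many pure strategies. $NME(mG)$ is the set of profiles $\sigma=(\sigma_1,\dots,\sigma_{|N|})$ such that each $\sigma_i$ is player $i$'s component of some Nash equilibrium of $G^i$. $\chi(\sigma)=\mathrm{supp}(\sigma_1)\times\dots\times\mathrm{supp}(\sigma_{|N|})$. For $\vec v\in S$, $mG_{\vec v}$ is obtained by replacing, in every $P^i$ ($i\ge1$), the payoff vector at position $\vec v$ by $P^0(\vec v)$. For a set $M$ of misinformation games, $\mathcal{AD}(M)=\{mG_{\vec u}: mG\in M,\sigma\in NME(mG),\vec u\in\chi(\sigma)\}$, $\mathcal{AD}^{(0)}(M)=M$, $\mathcal{AD}^{(t+1)}(M)=\mathcal{AD}^{(t)}(\mathcal{AD}(M))$. The length $\mathfrak{L}_{\mathcal{AD}}(mG)$ of the Adaptation Procedure on $mG$ is the least $t\ge0$ with $\mathcal{AD}^{(t+1)}(\{mG\})=\mathcal{AD}^{(t)}(\{mG\})$.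 *)

theory Defs
  imports Complex_Main
begin

text \<open>Players are 0,...,n-1; player i has pure strategies 0,...,k i - 1.
  A position is an extensional function s with s i < k i for i < n and s i = 0 otherwise.
  A canonical misinformation game (all component games share N and S) is represented by
  its family of payoff functions  mg j s p  (game j, position s, player p), where game 0 is
  the actual game and game Suc i is the subjective game of player i (i < n).\<close>

type_synonym payoff = "(nat \<Rightarrow> nat) \<Rightarrow> nat \<Rightarrow> real"
type_synonym mgame = "nat \<Rightarrow> payoff"

definition positions :: "nat \<Rightarrow> (nat \<Rightarrow> nat) \<Rightarrow> (nat \<Rightarrow> nat) set" where
  "positions n k = {s. (\<forall>i<n. s i < k i) \<and> (\<forall>i. n \<le> i \<longrightarrow> s i = 0)}"

definition mixed :: "(nat \<Rightarrow> nat) \<Rightarrow> nat \<Rightarrow> (nat \<Rightarrow> real) \<Rightarrow> bool" where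
  "mixed k i \<tau> \<longleftrightarrow> (\<forall>a. 0 \<le> \<tau> a) \<and> (\<forall>a. k i \<le> a \<longrightarrow> \<tau> a = 0) \<and> (\<Sum>a<k i. \<tau> a) = 1"

definition profile :: "nat \<Rightarrow> (nat \<Rightarrow> nat) \<Rightarrow> (nat \<Rightarrow> nat \<Rightarrow> real) \<Rightarrow> bool" where
  "profile n k \<sigma> \<longleftrightarrow> (\<forall>i<n. mixed k i (\<sigma> i)) \<and> (\<forall>i. n \<le> i \<longrightarrow> \<sigma> i = (\<lambda>_. 0))"

definition EU :: "nat \<Rightarrow> (nat \<Rightarrow> nat) \<Rightarrow> payoff \<Rightarrow> (nat \<Rightarrow> nat \<Rightarrow> real) \<Rightarrow> nat \<Rightarrow> real" where
  "EU n k P \<sigma> i = (\<Sum>s\<in>positions n k. (\<Prod>j<n. \<sigma> j (s j)) * P s i)"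

definition nash :: "nat \<Rightarrow> (nat \<Rightarrow> nat) \<Rightarrow> payoff \<Rightarrow> (nat \<Rightarrow> nat \<Rightarrow> real) \<Rightarrow> bool" where
  "nash n k P \<sigma> \<longleftrightarrow> profile n k \<sigma> \<and>
     (\<forall>i<n. \<forall>\<tau>. mixed k i \<tau> \<longrightarrow> EU n k P (\<sigma>(i := \<tau>)) i \<le> EU n k P \<sigma> i)"

definition NME :: "nat \<Rightarrow> (nat \<Rightarrow> nat) \<Rightarrow> mgame \<Rightarrow> (nat \<Rightarrow> nat \<Rightarrow> real) set" where
  "NME n k mg = {\<sigma>. profile n k \<sigma> \<and> (\<forall>i<n. \<exists>\<tau>. nash n k (mg (Suc i)) \<tau> \<and> \<sigma> i = \<tau> i)}"

definition chi :: "nat \<Rightarrow> (nat \<Rightarrow> nat) \<Rightarrow> (nat \<Rightarrow> nat \<Rightarrow> real) \<Rightarrow> (nat \<Rightarrow> nat) set" where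
  "chi n k \<sigma> = {s \<in> positions n k. \<forall>i<n. \<sigma> i (s i) \<noteq> 0}"

definition upd :: "nat \<Rightarrow> mgame \<Rightarrow> (nat \<Rightarrow> nat) \<Rightarrow> mgame" where
  "upd n mg v = (\<lambda>j s p. if 1 \<le> j \<and> j \<le> n \<and> s = v \<and> p < n then mg 0 v p else mg j s p)"

definition AD :: "nat \<Rightarrow> (nat \<Rightarrow> nat) \<Rightarrow> mgame set \<Rightarrow> mgame set" where
  "AD n k M = {upd n mg u | mg \<sigma> u. mg \<in> M \<and> \<sigma> \<in> NME n k mg \<and> u \<in> chi n k \<sigma>}"

fun ADiter :: "nat \<Rightarrow> (nat \<Rightarrow> nat) \<Rightarrow> nat \<Rightarrow> mgame set \<Rightarrow> mgame set" where
  "ADiter n k 0 M = M"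
| "ADiter n k (Suc t) M = ADiter n k t (AD n k M)"

definition ad_length :: "nat \<Rightarrow> (nat \<Rightarrow> nat) \<Rightarrow> mgame \<Rightarrow> nat" where
  "ad_length n k mg = (LEAST t. ADiter n k (Suc t) {mg} = ADiter n k t {mg})"

end

(*
  Call a position informed in a misinformation game if every subjective payoff vector at it
  coincides with the actual one. An adaptation step at a position u makes u informed and
  changes nothing else, so a step either leaves the game unchanged or strictly increases the
  number of informed positions, which is at most |S|. Consequently a run of |S| + 1 steps
  contains a trivial step, which can be dropped, and a run of |S| steps either contains a
  trivial step, which can be repeated, or ends in a fully informed game g. In the latter case
  g is in AD({g}), because NME(g) is nonempty by Nash's theorem.

  Nash's theorem is proved in the classical way, as a fixed point of Nash's map; the fixed
  point is provided by Brouwer's theorem for a cube, which follows from Kuhn's lemma.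
*)

theory Submission
  imports Defs "HOL-Analysis.Analysis"
begin

section \<open>Brouwer's fixed point theorem for a cube\<close>

lemma tendsto_coordinatewise_iff:
  fixes X :: "'a \<Rightarrow> 'i \<Rightarrow> 'b::topological_space"
  shows "(X \<longlongrightarrow> L) F \<longleftrightarrow> (\<forall>i. ((\<lambda>m. X m i) \<longlongrightarrow> L i) F)"
proof -
  have "(X \<longlongrightarrow> L) F \<longleftrightarrow> limitin (product_topology (\<lambda>i. euclidean) UNIV) X L F"
    by (simp add: euclidean_product_topology)
  also have "\<dots> \<longleftrightarrow> (\<forall>i. ((\<lambda>m. X m i) \<longlongrightarrow> L i) F)"
    by (simp add: limitin_componentwise)
  finally show ?thesis .
qed

definition cube :: "nat \<Rightarrow> (nat \<Rightarrow> real) set" where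
  "cube d = {x. (\<forall>i<d. 0 \<le> x i \<and> x i \<le> 1) \<and> (\<forall>i\<ge>d. x i = 0)}"

lemma compact_cube: "compact (cube d)"
proof -
  have "cube d = Pi\<^sub>E UNIV (\<lambda>i. if i < d then {0..1} else {0})"
    by (auto simp: cube_def PiE_UNIV_domain Pi_def not_less)
  moreover have "compactin (product_topology (\<lambda>i. euclidean) UNIV)
      (Pi\<^sub>E UNIV (\<lambda>i. if i < d then {0..1::real} else {0}))"
    by (subst compactin_PiE) auto
  ultimately show ?thesis
    by (simp add: euclidean_product_topology)
qed

lemma cube_nonneg: "x \<in> cube d \<Longrightarrow> 0 \<le> x j"
  by (cases "j < d") (auto simp: cube_def)

definition near :: "nat \<Rightarrow> real \<Rightarrow> (nat \<Rightarrow> real) \<Rightarrow> (nat \<Rightarrow> real) \<Rightarrow> bool" where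
  "near d e x y \<longleftrightarrow> (\<forall>j<d. \<bar>x j - y j\<bar> \<le> e)"

lemma kuhn_approximate_fixpoint:
  fixes f :: "(nat \<Rightarrow> real) \<Rightarrow> nat \<Rightarrow> real" and p :: nat
  assumes f_cube: "\<forall>x\<in>cube d. f x \<in> cube d" and "0 < p"
  shows "\<exists>z\<in>cube d. \<forall>i<d.
           (\<exists>a\<in>cube d. near d (1 / real p) a z \<and> a i \<le> f a i) \<and>
           (\<exists>b\<in>cube d. near d (1 / real p) b z \<and> f b i \<le> b i)"
proof -
  have "\<forall>x. x \<in> cube d \<longrightarrow> f x \<in> cube d"
    "\<forall>x. x \<in> cube d \<longrightarrow> (\<forall>i. i < d \<longrightarrow> 0 \<le> x i \<and> x i \<le> 1)"
    using f_cube by (auto simp: cube_def)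
  from kuhn_labelling_lemma'[where P="\<lambda>x. x \<in> cube d" and Q="\<lambda>i. i < d", OF this]
  obtain l :: "(nat \<Rightarrow> real) \<Rightarrow> nat \<Rightarrow> nat" where
    l: "\<forall>x i. l x i \<le> 1"
      "\<forall>x i. x \<in> cube d \<and> i < d \<and> x i = 0 \<longrightarrow> l x i = 0"
      "\<forall>x i. x \<in> cube d \<and> i < d \<and> x i = 1 \<longrightarrow> l x i = 1"
      "\<forall>x i. x \<in> cube d \<and> i < d \<and> l x i = 0 \<longrightarrow> x i \<le> f x i"
      "\<forall>x i. x \<in> cube d \<and> i < d \<and> l x i = 1 \<longrightarrow> f x i \<le> x i"
    by blast
  define pt where "pt y j = (if j < d then real (y j) / real p else 0)" for y j
  have pt_cube: "pt y \<in> cube d" if "\<forall>j<d. y j \<le> p" for y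
    using that \<open>0 < p\<close> by (auto simp: cube_def pt_def)
  have l01: "l x i = 0 \<or> l x i = 1" for x i
    using l(1) le_eq_less_or_eq by auto
  txt \<open>Kuhn's lemma yields a cell of the grid of mesh \<open>1 / p\<close> on whose vertices every
    label \<open>i\<close> takes both values.\<close>
  obtain q where q: "\<forall>i<d. q i < p"
    and label_change: "\<forall>i<d. \<exists>r s. (\<forall>j<d. q j \<le> r j \<and> r j \<le> q j + 1)
       \<and> (\<forall>j<d. q j \<le> s j \<and> s j \<le> q j + 1) \<and> l (pt r) i \<noteq> l (pt s) i"
  proof (rule kuhn_lemma[of p d "\<lambda>y i. l (pt y) i"])
    show "\<forall>x. (\<forall>i<d. x i \<le> p) \<longrightarrow> (\<forall>i<d. x i = 0 \<longrightarrow> l (pt x) i = 0)"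
      using l(2) pt_cube by (auto simp: pt_def)
    show "\<forall>x. (\<forall>i<d. x i \<le> p) \<longrightarrow> (\<forall>i<d. x i = p \<longrightarrow> l (pt x) i = 1)"
      using l(3) pt_cube \<open>0 < p\<close> by (auto simp: pt_def)
  qed (use \<open>0 < p\<close> l01 in auto)
  have vertex: "pt r \<in> cube d \<and> near d (1 / real p) (pt r) (pt q)"
    if "\<forall>j<d. q j \<le> r j \<and> r j \<le> q j + 1" for r
  proof -
    have "\<bar>real (r j) - real (q j)\<bar> / real p \<le> 1 / real p" if "j < d" for j
      using that \<open>\<forall>j<d. q j \<le> r j \<and> r j \<le> q j + 1\<close>
      by (intro divide_right_mono) auto
    then have "near d (1 / real p) (pt r) (pt q)"
      by (simp add: near_def pt_def abs_divide flip: diff_divide_distrib)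
    moreover have "\<forall>j<d. r j \<le> p"
      using that q by fastforce
    ultimately show ?thesis
      using pt_cube by blast
  qed
  have "pt q \<in> cube d"
    using q pt_cube by (simp add: less_imp_le)
  moreover have "(\<exists>a\<in>cube d. near d (1 / real p) a (pt q) \<and> a i \<le> f a i) \<and>
                 (\<exists>b\<in>cube d. near d (1 / real p) b (pt q) \<and> f b i \<le> b i)" if "i < d" for i
  proof -
    obtain r s where rs: "\<forall>j<d. q j \<le> r j \<and> r j \<le> q j + 1" "\<forall>j<d. q j \<le> s j \<and> s j \<le> q j + 1"
      and "l (pt r) i \<noteq> l (pt s) i"
      using label_change \<open>i < d\<close> by blast
    then have "l (pt r) i = 0 \<and> l (pt s) i = 1 \<or> l (pt r) i = 1 \<and> l (pt s) i = 0"
      using l01 by metis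
    then show ?thesis
      using l(4,5) vertex[OF rs(1)] vertex[OF rs(2)] \<open>i < d\<close> by blast
  qed
  ultimately show ?thesis
    by blast
qed

lemma limit_mem_closed_if_near:
  assumes "closed C" "C \<subseteq> cube d" "l \<in> cube d" "strict_mono r" "(z \<circ> r) \<longlonglongrightarrow> l"
    and near_C: "\<And>m. \<exists>a\<in>C. near d (1 / Suc m) a (z m)"
  shows "l \<in> C"
proof -
  obtain w where w: "\<And>m. w m \<in> C" "\<And>m. near d (1 / Suc m) (w m) (z m)"
    using near_C by metis
  have "(w \<circ> r) \<longlonglongrightarrow> l"
    unfolding tendsto_coordinatewise_iff
  proof
    fix j
    show "(\<lambda>m. (w \<circ> r) m j) \<longlonglongrightarrow> l j"
    proof (cases "j < d")
      case True
      have "(\<lambda>m. 1 / real (Suc (r m))) \<longlonglongrightarrow> 0"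
        using LIMSEQ_subseq_LIMSEQ[OF LIMSEQ_Suc[OF lim_1_over_n] \<open>strict_mono r\<close>]
        by (simp add: o_def)
      then have "(\<lambda>m. w (r m) j - z (r m) j) \<longlonglongrightarrow> 0"
        by (rule Lim_null_comparison[rotated]) (use w(2) True in \<open>auto simp: near_def\<close>)
      moreover have "(\<lambda>m. z (r m) j) \<longlonglongrightarrow> l j"
        using \<open>(z \<circ> r) \<longlonglongrightarrow> l\<close> by (simp add: tendsto_coordinatewise_iff o_def)
      ultimately show ?thesis
        using tendsto_add by fastforce
    next
      case False
      then have "w (r m) j = 0" "l j = 0" for m
        using w(1) \<open>C \<subseteq> cube d\<close> \<open>l \<in> cube d\<close> by (auto simp: cube_def subset_iff not_less)
      then show ?thesis
        by simp
    qed
  qed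
  moreover have "\<forall>m. (w \<circ> r) m \<in> C"
    using w(1) by simp
  ultimately show ?thesis
    using closed_sequentially[OF \<open>closed C\<close>] by blast
qed

theorem brouwer_cube:
  fixes f :: "(nat \<Rightarrow> real) \<Rightarrow> nat \<Rightarrow> real"
  assumes cont: "continuous_on (cube d) f" and f_cube: "\<forall>x\<in>cube d. f x \<in> cube d"
  shows "\<exists>x\<in>cube d. f x = x"
proof -
  have "\<forall>m. \<exists>z\<in>cube d. \<forall>i<d.
       (\<exists>a\<in>cube d. near d (1 / Suc m) a z \<and> a i \<le> f a i) \<and>
       (\<exists>b\<in>cube d. near d (1 / Suc m) b z \<and> f b i \<le> b i)"
    using kuhn_approximate_fixpoint[OF f_cube] by blast
  then obtain z where z: "\<And>m. z m \<in> cube d"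
    and approx: "\<And>m i. i < d \<Longrightarrow>
       (\<exists>a\<in>cube d. near d (1 / Suc m) a (z m) \<and> a i \<le> f a i) \<and>
       (\<exists>b\<in>cube d. near d (1 / Suc m) b (z m) \<and> f b i \<le> b i)"
    unfolding Bex_def choice_iff by blast
  obtain l r where l: "l \<in> cube d" and "strict_mono r" and "(z \<circ> r) \<longlonglongrightarrow> l"
    using compact_cube[THEN compact_imp_seq_compact] z unfolding seq_compact_def by metis
  have coord_cont: "continuous_on (cube d) (\<lambda>x. f x i)" for i
    using cont by (rule continuous_on_product_then_coordinatewise)
  have "f l i = l i" if "i < d" for i
  proof -
    have closed: "closed {x \<in> cube d. x i \<le> f x i}" "closed {x \<in> cube d. f x i \<le> x i}"
      using compact_imp_closed[OF compact_cube] coord_cont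
        continuous_on_product_then_coordinatewise[OF continuous_on_id]
      by (auto intro!: continuous_on_closed_Collect_le)
    have "l \<in> {x \<in> cube d. x i \<le> f x i}"
      by (rule limit_mem_closed_if_near[OF closed(1) _ l \<open>strict_mono r\<close> \<open>(z \<circ> r) \<longlonglongrightarrow> l\<close>])
        (use approx[OF that] in auto)
    moreover have "l \<in> {x \<in> cube d. f x i \<le> x i}"
      by (rule limit_mem_closed_if_near[OF closed(2) _ l \<open>strict_mono r\<close> \<open>(z \<circ> r) \<longlonglongrightarrow> l\<close>])
        (use approx[OF that] in auto)
    ultimately show ?thesis
      by simp
  qed
  moreover have "f l i = l i" if "\<not> i < d" for i
    using that f_cube l by (auto simp: cube_def not_less)
  ultimately have "f l = l"
    by blast
  with l show ?thesis
    by blast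
qed


section \<open>Existence of Nash equilibria\<close>

definition pure_payoff :: "nat \<Rightarrow> (nat \<Rightarrow> nat) \<Rightarrow> payoff \<Rightarrow> (nat \<Rightarrow> nat \<Rightarrow> real) \<Rightarrow> nat \<Rightarrow> nat \<Rightarrow> real"
  where "pure_payoff n k P \<sigma> i a = EU n k P (\<sigma>(i := indicator {a})) i"

lemma EU_fun_upd:
  assumes "i < n"
  shows "EU n k P (\<sigma>(i := \<tau>)) i =
    (\<Sum>s\<in>positions n k. \<tau> (s i) * ((\<Prod>j\<in>{..<n} - {i}. \<sigma> j (s j)) * P s i))"
  unfolding EU_def
proof (rule sum.cong[OF refl])
  fix s
  have "(\<Prod>j<n. (\<sigma>(i := \<tau>)) j (s j)) = \<tau> (s i) * (\<Prod>j\<in>{..<n} - {i}. (\<sigma>(i := \<tau>)) j (s j))"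
    using assms by (subst prod.remove[of _ i]) auto
  also have "(\<Prod>j\<in>{..<n} - {i}. (\<sigma>(i := \<tau>)) j (s j)) = (\<Prod>j\<in>{..<n} - {i}. \<sigma> j (s j))"
    by (rule prod.cong) auto
  finally show "(\<Prod>j<n. (\<sigma>(i := \<tau>)) j (s j)) * P s i
      = \<tau> (s i) * ((\<Prod>j\<in>{..<n} - {i}. \<sigma> j (s j)) * P s i)"
    by simp
qed

lemma EU_fun_upd_eq_sum_pure_payoff:
  assumes "i < n" and \<tau>: "\<forall>a. k i \<le> a \<longrightarrow> \<tau> a = 0"
  shows "EU n k P (\<sigma>(i := \<tau>)) i = (\<Sum>a<k i. \<tau> a * pure_payoff n k P \<sigma> i a)"
proof -
  define W where "W s = (\<Prod>j\<in>{..<n} - {i}. \<sigma> j (s j)) * P s i" for s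
  have "(\<Sum>a<k i. \<tau> a * pure_payoff n k P \<sigma> i a)
      = (\<Sum>a<k i. \<Sum>s\<in>positions n k. \<tau> a * (indicator {a} (s i) * W s))"
    by (simp add: pure_payoff_def EU_fun_upd[OF \<open>i < n\<close>] W_def sum_distrib_left)
  also have "\<dots> = (\<Sum>s\<in>positions n k. \<Sum>a<k i. if a = s i then \<tau> a * W s else 0)"
    by (subst sum.swap) (auto intro!: sum.cong simp: indicator_def)
  also have "\<dots> = (\<Sum>s\<in>positions n k. \<tau> (s i) * W s)"
    using \<tau> by (intro sum.cong refl) (auto simp: not_less)
  also have "\<dots> = EU n k P (\<sigma>(i := \<tau>)) i"
    by (simp add: EU_fun_upd[OF \<open>i < n\<close>] W_def)
  finally show ?thesis ..
qed

lemma EU_eq_sum_pure_payoff: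
  assumes "i < n" "mixed k i (\<sigma> i)"
  shows "EU n k P \<sigma> i = (\<Sum>a<k i. \<sigma> i a * pure_payoff n k P \<sigma> i a)"
  using EU_fun_upd_eq_sum_pure_payoff[of i n k "\<sigma> i" P \<sigma>] assms by (simp add: mixed_def)

lemma nash_iff_no_better_pure_strategy:
  assumes "profile n k \<sigma>"
  shows "nash n k P \<sigma> \<longleftrightarrow> (\<forall>i<n. \<forall>a<k i. pure_payoff n k P \<sigma> i a \<le> EU n k P \<sigma> i)"
proof
  assume "nash n k P \<sigma>"
  moreover have "mixed k i (indicator {a})" if "a < k i" for i a
    using that by (simp add: mixed_def indicator_def)
  ultimately show "\<forall>i<n. \<forall>a<k i. pure_payoff n k P \<sigma> i a \<le> EU n k P \<sigma> i"
    by (simp add: nash_def pure_payoff_def)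
next
  assume pure: "\<forall>i<n. \<forall>a<k i. pure_payoff n k P \<sigma> i a \<le> EU n k P \<sigma> i"
  have "EU n k P (\<sigma>(i := \<tau>)) i \<le> EU n k P \<sigma> i" if "i < n" "mixed k i \<tau>" for i \<tau>
  proof -
    have "EU n k P (\<sigma>(i := \<tau>)) i = (\<Sum>a<k i. \<tau> a * pure_payoff n k P \<sigma> i a)"
      using that by (simp add: EU_fun_upd_eq_sum_pure_payoff mixed_def)
    also have "\<dots> \<le> (\<Sum>a<k i. \<tau> a * EU n k P \<sigma> i)"
      using that pure by (intro sum_mono mult_left_mono) (auto simp: mixed_def)
    also have "\<dots> = EU n k P \<sigma> i"
      using that by (simp add: mixed_def flip: sum_distrib_right)
    finally show ?thesis .
  qed
  then show "nash n k P \<sigma>"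
    using assms by (simp add: nash_def)
qed

lemma exists_pos_weight_le_weighted_mean:
  fixes w u :: "nat \<Rightarrow> real"
  assumes "\<forall>a<m. 0 \<le> w a" "(\<Sum>a<m. w a) = 1"
  shows "\<exists>a<m. 0 < w a \<and> u a \<le> (\<Sum>b<m. w b * u b)"
proof (rule ccontr)
  let ?E = "\<Sum>b<m. w b * u b"
  assume "\<not> ?thesis"
  then have above: "?E < u a" if "a < m" "0 < w a" for a
    using that by (auto simp: not_le)
  have "w a * ?E \<le> w a * u a" if "a < m" for a
    using above[OF that] assms(1) that by (cases "w a = 0") (auto intro!: mult_left_mono)
  moreover obtain a where "a < m" "0 < w a"
    using assms by (metis le_less lessThan_iff sum.neutral zero_neq_one)
  ultimately have "(\<Sum>b<m. w b * ?E) < (\<Sum>b<m. w b * u b)"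
    using above by (intro sum_strict_mono_ex1) (auto intro!: bexI[of _ a])
  then show False
    using assms(2) by (simp flip: sum_distrib_right)
qed

definition gain :: "nat \<Rightarrow> (nat \<Rightarrow> nat) \<Rightarrow> payoff \<Rightarrow> (nat \<Rightarrow> nat \<Rightarrow> real) \<Rightarrow> nat \<Rightarrow> nat \<Rightarrow> real"
  where "gain n k P \<sigma> i a = max 0 (pure_payoff n k P \<sigma> i a - EU n k P \<sigma> i)"

text \<open>Nash's map: each player shifts weight towards the pure strategies that improve on
  their current expected payoff.\<close>

definition nash_map :: "nat \<Rightarrow> (nat \<Rightarrow> nat) \<Rightarrow> payoff \<Rightarrow> (nat \<Rightarrow> nat \<Rightarrow> real) \<Rightarrow> nat \<Rightarrow> nat \<Rightarrow> real"
  where "nash_map n k P \<sigma> i a =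
    (if i < n \<and> a < k i
     then (\<sigma> i a + gain n k P \<sigma> i a) / (1 + (\<Sum>b<k i. gain n k P \<sigma> i b)) else 0)"

lemma gain_nonneg: "0 \<le> gain n k P \<sigma> i a"
  by (simp add: gain_def)

lemma sum_gain_nonneg: "0 \<le> (\<Sum>b\<in>B. gain n k P \<sigma> i b)"
  by (simp add: gain_nonneg sum_nonneg)

lemma profile_nash_map:
  assumes "profile n k \<sigma>"
  shows "profile n k (nash_map n k P \<sigma>)"
proof -
  have "mixed k i (nash_map n k P \<sigma> i)" if "i < n" for i
  proof -
    let ?G = "\<Sum>b<k i. gain n k P \<sigma> i b"
    have \<sigma>i: "mixed k i (\<sigma> i)"
      using assms that by (simp add: profile_def)
    have "(\<Sum>a<k i. nash_map n k P \<sigma> i a) = (\<Sum>a<k i. \<sigma> i a + gain n k P \<sigma> i a) / (1 + ?G)"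
      using that by (simp add: nash_map_def sum_divide_distrib)
    also have "\<dots> = 1"
      using \<sigma>i sum_gain_nonneg[of n k P \<sigma> i "{..<k i}"] by (simp add: sum.distrib mixed_def)
    finally show ?thesis
      using \<sigma>i sum_gain_nonneg
      by (auto simp: mixed_def nash_map_def gain_nonneg add_nonneg_nonneg)
  qed
  then show ?thesis
    by (auto simp: profile_def nash_map_def fun_eq_iff)
qed

lemma nash_if_nash_map_fixpoint:
  assumes \<sigma>: "profile n k \<sigma>" and fixpoint: "nash_map n k P \<sigma> = \<sigma>"
  shows "nash n k P \<sigma>"
  unfolding nash_iff_no_better_pure_strategy[OF \<sigma>]
proof (intro allI impI)
  fix i b assume "i < n" "b < k i"
  let ?G = "\<Sum>b<k i. gain n k P \<sigma> i b"
  have \<sigma>i: "mixed k i (\<sigma> i)"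
    using \<sigma> \<open>i < n\<close> by (simp add: profile_def)
  then have "\<exists>a<k i. 0 < \<sigma> i a \<and>
      pure_payoff n k P \<sigma> i a \<le> (\<Sum>b<k i. \<sigma> i b * pure_payoff n k P \<sigma> i b)"
    by (intro exists_pos_weight_le_weighted_mean) (auto simp: mixed_def)
  then obtain a where a: "a < k i" "0 < \<sigma> i a" "pure_payoff n k P \<sigma> i a \<le> EU n k P \<sigma> i"
    using EU_eq_sum_pure_payoff[of i n k \<sigma> P] \<open>i < n\<close> \<sigma>i by auto
  have "\<sigma> i a = \<sigma> i a / (1 + ?G)"
    using fun_cong[OF fun_cong[OF fixpoint, of i], of a] \<open>i < n\<close> a
    by (simp add: nash_map_def gain_def)
  then have "\<sigma> i a * (1 + ?G) = \<sigma> i a"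
    using sum_gain_nonneg[of n k P \<sigma> i "{..<k i}"] by (simp add: field_simps)
  then have "?G = 0"
    using a(2) by (simp add: algebra_simps)
  then have "gain n k P \<sigma> i b = 0"
    using \<open>b < k i\<close> by (simp add: sum_nonneg_eq_0_iff gain_nonneg)
  then show "pure_payoff n k P \<sigma> i b \<le> EU n k P \<sigma> i"
    by (simp add: gain_def)
qed

lemma continuous_on_EU:
  assumes "\<And>j c. continuous_on S (\<lambda>x. \<sigma> x j c)"
  shows "continuous_on S (\<lambda>x. EU n k P (\<sigma> x) i)"
  unfolding EU_def by (intro continuous_intros assms)

lemma continuous_on_pure_payoff:
  assumes "\<And>j c. continuous_on S (\<lambda>x. \<sigma> x j c)"
  shows "continuous_on S (\<lambda>x. pure_payoff n k P (\<sigma> x) i a)"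
  unfolding pure_payoff_def
proof (rule continuous_on_EU)
  fix j c
  show "continuous_on S (\<lambda>x. ((\<sigma> x)(i := indicator {a})) j c)"
    using assms[of j c] by (cases "j = i") simp_all
qed

lemma continuous_on_gain:
  assumes "\<And>j c. continuous_on S (\<lambda>x. \<sigma> x j c)"
  shows "continuous_on S (\<lambda>x. gain n k P (\<sigma> x) i a)"
  unfolding gain_def by (intro continuous_intros continuous_on_EU continuous_on_pure_payoff assms)

lemma continuous_on_nash_map:
  assumes "\<And>j c. continuous_on S (\<lambda>x. \<sigma> x j c)"
  shows "continuous_on S (\<lambda>x. nash_map n k P (\<sigma> x) i a)"
proof (cases "i < n \<and> a < k i")
  case True
  have "1 + (\<Sum>b<k i. gain n k P (\<sigma> x) i b) \<noteq> 0" for x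
    using sum_gain_nonneg[of n k P "\<sigma> x" i "{..<k i}"] by linarith
  then show ?thesis
    using True unfolding nash_map_def
    by (auto intro!: continuous_intros continuous_on_gain assms)
next
  case False
  then show ?thesis by (simp add: nash_map_def if_not_P[OF False])
qed

lemma mixed_le_1:
  assumes "mixed k i \<tau>"
  shows "\<tau> a \<le> 1"
proof (cases "a < k i")
  case True
  then have "\<tau> a \<le> (\<Sum>b<k i. \<tau> b)"
    using assms by (intro member_le_sum) (auto simp: mixed_def)
  then show ?thesis
    using assms by (simp add: mixed_def)
qed (use assms in \<open>simp add: mixed_def\<close>)

text \<open>A profile is coded as a point of a cube by storing \<open>\<sigma> i a\<close> at coordinate
  \<open>prod_encode (i, a)\<close>. Conversely, \<open>decode_profile\<close> reads the weights of the strategies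
  \<open>a \<ge> 1\<close> from a point, scales them down if their sum exceeds 1 and gives the remaining mass
  to strategy 0.\<close>

definition profile_code :: "(nat \<Rightarrow> nat \<Rightarrow> real) \<Rightarrow> nat \<Rightarrow> real"
  where "profile_code \<sigma> j = (case prod_decode j of (i, a) \<Rightarrow> \<sigma> i a)"

definition tail_mass :: "(nat \<Rightarrow> nat) \<Rightarrow> (nat \<Rightarrow> real) \<Rightarrow> nat \<Rightarrow> real"
  where "tail_mass k x i = (\<Sum>b\<in>{1..<k i}. x (prod_encode (i, b)))"

definition decode_profile :: "nat \<Rightarrow> (nat \<Rightarrow> nat) \<Rightarrow> (nat \<Rightarrow> real) \<Rightarrow> nat \<Rightarrow> nat \<Rightarrow> real"
  where "decode_profile n k x i a =
    (if i < n \<and> a < k i then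
       if a = 0 then 1 - tail_mass k x i / max 1 (tail_mass k x i)
       else x (prod_encode (i, a)) / max 1 (tail_mass k x i)
     else 0)"

lemma sum_lessThan_split_0:
  fixes g :: "nat \<Rightarrow> 'a::comm_monoid_add"
  assumes "0 < m"
  shows "(\<Sum>a<m. g a) = g 0 + (\<Sum>a\<in>{1..<m}. g a)"
  using sum.atLeast_Suc_lessThan[OF assms, of g] by (simp add: atLeast0LessThan)

lemma profile_decode_profile:
  assumes "\<forall>j. 0 \<le> x j" and "\<forall>i<n. 1 \<le> k i"
  shows "profile n k (decode_profile n k x)"
proof -
  have "mixed k i (decode_profile n k x i)" if "i < n" for i
  proof -
    let ?S = "tail_mass k x i"
    have "0 \<le> ?S"
      using assms(1) by (simp add: tail_mass_def sum_nonneg)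
    then have "?S / max 1 ?S \<le> 1"
      by simp
    moreover have "(\<Sum>a<k i. decode_profile n k x i a)
        = decode_profile n k x i 0 + (\<Sum>a\<in>{1..<k i}. decode_profile n k x i a)"
      using assms(2) that by (intro sum_lessThan_split_0) (simp add: Suc_le_eq)
    moreover have "(\<Sum>a\<in>{1..<k i}. decode_profile n k x i a) = ?S / max 1 ?S"
      using that by (simp add: decode_profile_def tail_mass_def sum_divide_distrib)
    moreover have "decode_profile n k x i 0 = 1 - ?S / max 1 ?S"
      using assms(2) that by (simp add: decode_profile_def Suc_le_eq)
    ultimately show ?thesis
      using assms(1) by (auto simp: mixed_def decode_profile_def)
  qed
  then show ?thesis
    by (auto simp: profile_def decode_profile_def fun_eq_iff)
qed

lemma decode_profile_code:
  assumes \<sigma>: "profile n k \<sigma>"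
  shows "decode_profile n k (profile_code \<sigma>) = \<sigma>"
proof (intro ext)
  fix i a
  show "decode_profile n k (profile_code \<sigma>) i a = \<sigma> i a"
  proof (cases "i < n \<and> a < k i")
    case True
    then have \<sigma>i: "mixed k i (\<sigma> i)"
      using \<sigma> by (simp add: profile_def)
    have "tail_mass k (profile_code \<sigma>) i = (\<Sum>b\<in>{1..<k i}. \<sigma> i b)"
      by (simp add: tail_mass_def profile_code_def)
    also have "\<dots> = 1 - \<sigma> i 0"
      using \<sigma>i True sum_lessThan_split_0[of "k i" "\<sigma> i"] by (simp add: mixed_def)
    finally have "tail_mass k (profile_code \<sigma>) i = 1 - \<sigma> i 0" .
    moreover have "0 \<le> \<sigma> i 0"
      using \<sigma>i by (simp add: mixed_def)
    ultimately show ?thesis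
      using True by (simp add: decode_profile_def profile_code_def)
  next
    case False
    then have "\<sigma> i a = 0"
      using \<sigma> by (cases "i < n") (auto simp: profile_def mixed_def)
    then show ?thesis
      by (simp add: decode_profile_def if_not_P[OF False])
  qed
qed

lemma profile_code_in_cube:
  assumes \<sigma>: "profile n k \<sigma>" and d: "\<forall>i<n. \<forall>a<k i. prod_encode (i, a) < d"
  shows "profile_code \<sigma> \<in> cube d"
proof -
  have bounded: "0 \<le> \<sigma> i a \<and> \<sigma> i a \<le> 1" for i a
    using \<sigma> mixed_le_1 by (cases "i < n") (auto simp: profile_def mixed_def)
  have vanish: "\<sigma> i a = 0" if "\<not> prod_encode (i, a) < d" for i a
  proof (cases "i < n")
    case True
    then have "k i \<le> a"
      using d that by (meson not_less)
    then show ?thesis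
      using \<sigma> True by (simp add: profile_def mixed_def)
  qed (use \<sigma> in \<open>simp add: profile_def\<close>)
  have "0 \<le> profile_code \<sigma> j \<and> profile_code \<sigma> j \<le> 1 \<and> (d \<le> j \<longrightarrow> profile_code \<sigma> j = 0)"
    for j
  proof -
    obtain i a where "prod_decode j = (i, a)"
      by fastforce
    moreover from this have "j = prod_encode (i, a)"
      by (metis prod_decode_inverse)
    ultimately show ?thesis
      using bounded vanish by (auto simp: profile_code_def not_less)
  qed
  then show ?thesis
    by (simp add: cube_def)
qed

lemma continuous_on_decode_profile: "continuous_on S (\<lambda>x. decode_profile n k x i a)"
proof -
  have mass: "continuous_on S (\<lambda>x. tail_mass k x i)"
    unfolding tail_mass_def
    by (intro continuous_intros continuous_on_subset[OF continuous_on_product_coordinates]) simp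
  have "max 1 (tail_mass k x i) \<noteq> 0" for x
    by (metis max.cobounded1 not_one_le_zero)
  then show ?thesis
  proof (cases "i < n \<and> a < k i")
    case True
    then show ?thesis
      using \<open>\<And>x. max 1 (tail_mass k x i) \<noteq> 0\<close>
      by (cases "a = 0") (auto simp: decode_profile_def intro!: continuous_intros mass
          continuous_on_subset[OF continuous_on_product_coordinates])
  next
    case False
    then show ?thesis by (simp add: decode_profile_def if_not_P[OF False])
  qed
qed

theorem nash_exists:
  assumes "\<forall>i<n. 1 \<le> k i"
  shows "\<exists>\<sigma>. nash n k P \<sigma>"
proof -
  have "finite (prod_encode ` (SIGMA i:{..<n}. {..<k i}))"
    by auto
  then obtain d where d: "\<forall>i<n. \<forall>a<k i. prod_encode (i, a) < d"
    by (auto simp: finite_nat_iff_bounded)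
  define F where "F x = profile_code (nash_map n k P (decode_profile n k x))" for x
  have "continuous_on (cube d) F"
  proof (rule continuous_on_coordinatewise_then_product)
    fix j
    obtain i a where "prod_decode j = (i, a)"
      by fastforce
    then show "continuous_on (cube d) (\<lambda>x. F x j)"
      unfolding F_def profile_code_def
      by (auto intro!: continuous_on_nash_map continuous_on_decode_profile)
  qed
  moreover have decode_profile: "profile n k (decode_profile n k x)" if "x \<in> cube d" for x
    using that assms by (intro profile_decode_profile) (auto simp: cube_nonneg)
  then have "\<forall>x\<in>cube d. F x \<in> cube d"
    unfolding F_def using d by (blast intro: profile_code_in_cube profile_nash_map)
  ultimately obtain x where x: "x \<in> cube d" "F x = x"
    using brouwer_cube by blast
  define \<sigma> where "\<sigma> = nash_map n k P (decode_profile n k x)"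
  have \<sigma>: "profile n k \<sigma>"
    unfolding \<sigma>_def using x(1) by (intro profile_nash_map decode_profile)
  have "decode_profile n k x = \<sigma>"
    using x(2) decode_profile_code[OF \<sigma>] by (simp add: F_def \<sigma>_def)
  then have "nash_map n k P \<sigma> = \<sigma>"
    by (simp add: \<sigma>_def)
  then show ?thesis
    using nash_if_nash_map_fixpoint[OF \<sigma>] by blast
qed


section \<open>The adaptation procedure\<close>

context
  fixes R :: "'a rel" and c :: "'a \<Rightarrow> nat"
  assumes loop_or_increase: "\<And>x y. (x, y) \<in> R \<Longrightarrow> y = x \<or> c x < c y"
begin

lemma relpow_Suc_shorten:
  "(x, y) \<in> R ^^ Suc t \<Longrightarrow> Suc t \<le> c y \<or> (x, y) \<in> R ^^ t"
proof (induction t arbitrary: y)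
  case 0
  then show ?case
    using loop_or_increase by fastforce
next
  case (Suc t)
  then obtain z where xz: "(x, z) \<in> R ^^ Suc t" and zy: "(z, y) \<in> R"
    by (meson relpow_Suc_E)
  show ?case
  proof (cases "y = z")
    case True
    then show ?thesis
      using xz by simp
  next
    case False
    then have "c z < c y"
      using loop_or_increase[OF zy] by blast
    then show ?thesis
      using Suc.IH[OF xz] zy by auto
  qed
qed

lemma relpow_lengthen:
  "(x, y) \<in> R ^^ t \<Longrightarrow> t \<le> c y \<or> (x, y) \<in> R ^^ Suc t"
proof (induction t arbitrary: y)
  case 0
  then show ?case
    by simp
next
  case (Suc t)
  then obtain z where xz: "(x, z) \<in> R ^^ t" and zy: "(z, y) \<in> R"
    by auto
  show ?case
  proof (cases "y = z")
    case True
    then show ?thesis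
      using Suc.prems zy by auto
  next
    case False
    then have "c z < c y"
      using loop_or_increase[OF zy] by blast
    then show ?thesis
      using Suc.IH[OF xz] zy by auto
  qed
qed

text \<open>A walk of length \<open>N + 1\<close> must contain a loop, which can be dropped; a walk of
  length \<open>N\<close> either contains a loop, which can be repeated, or ends where \<open>c\<close> is maximal.\<close>

lemma relpow_Suc_eq_relpow:
  assumes bounded: "\<And>x. c x \<le> N" and maximal_loop: "\<And>x. c x = N \<Longrightarrow> (x, x) \<in> R"
  shows "R ^^ Suc N = R ^^ N"
proof (intro set_eqI iffI; clarify)
  fix x y
  assume "(x, y) \<in> R ^^ Suc N"
  then show "(x, y) \<in> R ^^ N"
    using relpow_Suc_shorten bounded[of y] by fastforce
next
  fix x y
  assume xy: "(x, y) \<in> R ^^ N"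
  show "(x, y) \<in> R ^^ Suc N"
  proof (cases "N \<le> c y")
    case True
    then have "(y, y) \<in> R"
      using bounded[of y] maximal_loop by (simp add: le_antisym)
    then show ?thesis
      using xy by auto
  next
    case False
    then show ?thesis
      using relpow_lengthen[OF xy] by blast
  qed
qed

end

lemma finite_positions: "finite (positions n k)"
proof -
  have "positions n k \<subseteq> (\<lambda>s i. if i < n then s i else 0) ` Pi\<^sub>E {..<n} (\<lambda>i. {..<k i})"
  proof
    fix s
    assume s: "s \<in> positions n k"
    then have "s = (\<lambda>i. if i < n then restrict s {..<n} i else 0)"
      by (auto simp: positions_def fun_eq_iff not_less)
    moreover have "restrict s {..<n} \<in> Pi\<^sub>E {..<n} (\<lambda>i. {..<k i})"
      using s by (simp add: positions_def)
    ultimately show "s \<in> (\<lambda>s i. if i < n then s i else 0) ` Pi\<^sub>E {..<n} (\<lambda>i. {..<k i})"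
      by blast
  qed
  then show ?thesis
    using finite_subset by (blast intro: finite_PiE)
qed

lemma chi_nonempty:
  assumes "profile n k \<sigma>"
  shows "chi n k \<sigma> \<noteq> {}"
proof -
  have "\<exists>a<k i. \<sigma> i a \<noteq> 0" if "i < n" for i
  proof -
    have "(\<Sum>a<k i. \<sigma> i a) = 1"
      using assms that by (simp add: profile_def mixed_def)
    then show ?thesis
      by (metis lessThan_iff sum.neutral zero_neq_one)
  qed
  then obtain A where A: "\<And>i. i < n \<Longrightarrow> A i < k i \<and> \<sigma> i (A i) \<noteq> 0"
    by metis
  then have "(\<lambda>i. if i < n then A i else 0) \<in> chi n k \<sigma>"
    by (simp add: chi_def positions_def)
  then show ?thesis
    by blast
qed

lemma NME_nonempty:
  assumes "\<forall>i<n. 1 \<le> k i"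
  shows "NME n k g \<noteq> {}"
proof -
  have "\<forall>i. \<exists>\<tau>. nash n k (g (Suc i)) \<tau>"
    using nash_exists[OF assms] by blast
  then obtain \<tau> where \<tau>: "\<And>i. nash n k (g (Suc i)) (\<tau> i)"
    by metis
  define \<sigma> where "\<sigma> i = (if i < n then \<tau> i i else (\<lambda>_. 0))" for i
  have "profile n k \<sigma>"
    using \<tau> by (auto simp: profile_def nash_def \<sigma>_def)
  moreover have "\<forall>i<n. \<exists>\<tau>'. nash n k (g (Suc i)) \<tau>' \<and> \<sigma> i = \<tau>' i"
    using \<tau> by (auto simp: \<sigma>_def)
  ultimately have "\<sigma> \<in> NME n k g"
    by (simp add: NME_def)
  then show ?thesis
    by blast
qed

definition informed_positions :: "nat \<Rightarrow> (nat \<Rightarrow> nat) \<Rightarrow> mgame \<Rightarrow> (nat \<Rightarrow> nat) set" where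
  "informed_positions n k g =
    {v \<in> positions n k. \<forall>j p. 1 \<le> j \<and> j \<le> n \<and> p < n \<longrightarrow> g j v p = g 0 v p}"

lemma finite_informed_positions: "finite (informed_positions n k g)"
  unfolding informed_positions_def by (rule finite_subset[OF _ finite_positions]) auto

lemma card_informed_positions_le: "card (informed_positions n k g) \<le> card (positions n k)"
  unfolding informed_positions_def by (rule card_mono[OF finite_positions]) auto

lemma upd_informed_position: "u \<in> informed_positions n k g \<Longrightarrow> upd n g u = g"
  unfolding upd_def informed_positions_def by (intro ext) auto

lemma informed_positions_upd:
  "u \<in> positions n k \<Longrightarrow> insert u (informed_positions n k g) \<subseteq> informed_positions n k (upd n g u)"
  unfolding informed_positions_def upd_def by auto

definition ad_step :: "nat \<Rightarrow> (nat \<Rightarrow> nat) \<Rightarrow> mgame rel" where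
  "ad_step n k = {(g, h). h \<in> AD n k {g}}"

lemma ADiter_eq_relpow: "ADiter n k t M = (ad_step n k ^^ t) `` M"
proof (induction t arbitrary: M)
  case 0
  then show ?case
    by simp
next
  case (Suc t)
  have "AD n k M = ad_step n k `` M"
    by (auto simp: ad_step_def AD_def)
  then have "ADiter n k (Suc t) M = (ad_step n k O ad_step n k ^^ t) `` M"
    by (simp add: Suc relcomp_Image)
  then show ?case
    by (simp add: relpow_commute)
qed

lemma ad_step_trivial_or_more_informed:
  assumes "(g, h) \<in> ad_step n k"
  shows "h = g \<or> card (informed_positions n k g) < card (informed_positions n k h)"
proof -
  obtain \<sigma> u where h: "h = upd n g u" and u: "u \<in> chi n k \<sigma>"
    using assms by (auto simp: ad_step_def AD_def)
  show ?thesis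
  proof (cases "u \<in> informed_positions n k g")
    case True
    then show ?thesis
      using h upd_informed_position by blast
  next
    case False
    then have "card (informed_positions n k g) < card (insert u (informed_positions n k g))"
      by (simp add: finite_informed_positions)
    also have "\<dots> \<le> card (informed_positions n k h)"
      using u h informed_positions_upd
      by (intro card_mono finite_informed_positions) (simp add: chi_def)
    finally show ?thesis ..
  qed
qed

lemma ad_step_refl_if_fully_informed:
  assumes "\<forall>i<n. 1 \<le> k i" and full: "card (informed_positions n k g) = card (positions n k)"
  shows "(g, g) \<in> ad_step n k"
proof -
  obtain \<sigma> where \<sigma>: "\<sigma> \<in> NME n k g"
    using NME_nonempty[OF assms(1)] by blast
  then obtain u where u: "u \<in> chi n k \<sigma>"
    using chi_nonempty by (fastforce simp: NME_def)
  have "informed_positions n k g = positions n k"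
    using full by (intro card_subset_eq finite_positions) (auto simp: informed_positions_def)
  then have "u \<in> informed_positions n k g"
    using u by (simp add: chi_def)
  then have "upd n g u = g"
    by (rule upd_informed_position)
  then show ?thesis
    using \<sigma> u unfolding ad_step_def AD_def by force
qed

theorem proposition12:
  fixes n :: nat and k :: "nat \<Rightarrow> nat" and mg :: mgame
  assumes "1 \<le> n" and "\<forall>i<n. 1 \<le> k i"
  shows "(\<exists>t. ADiter n k (Suc t) {mg} = ADiter n k t {mg})
         \<and> ad_length n k mg \<le> card (positions n k)"
proof -
  have "ad_step n k ^^ Suc (card (positions n k)) = ad_step n k ^^ card (positions n k)"
    using ad_step_trivial_or_more_informed card_informed_positions_le
      ad_step_refl_if_fully_informed[OF assms(2)]
    by (rule relpow_Suc_eq_relpow)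
  then have "ADiter n k (Suc (card (positions n k))) {mg} = ADiter n k (card (positions n k)) {mg}"
    by (simp add: ADiter_eq_relpow)
  then show ?thesis
    unfolding ad_length_def by (blast intro: Least_le)
qed

end
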